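(* Let $(\Omega,\mathcal{F},\mathbf{P})$ be a probability space and $\theta\colon\Omega\to\Omega$ an ergodic automorphism. Let $A$ be an $N\times N$ matrix with all entries positive, and let $D(\omega)=\mathrm{diag}(d_1(\omega),\dots,d_N(\omega))$ be measurable with $d_i(\omega)>0$ and $\ln^{+}(\max_i d_i(\cdot))\in L_1(\Omega,\mathcal{F},\mathbf{P})$; put $S(\omega)=AD(\omega)$. Suppose $\Omega_0\in\mathcal{F}$ with $\theta(\Omega_0)=\Omega_0$, $\mathbf{P}(\Omega_0)=1$, $w=(w_1,\dots,w_N)\colon\Omega_0\to\mathbb{R}^N$ is measurable with $w(\omega)$ a positive vector and $\|w(\omega)\|=1$ for all $\omega\in\Omega_0$, and $\rho\colon\Omega_0\to(0,\infty)$ satisfies $S(\omega)w(\omega)=\rho(\omega)w(\theta\omega)$ for all $\omega\in\Omega_0$ (such objects exist, with $\lim_{n\to\infty}\frac1n\ln\|S^{(n)}(\omega)w(\omega)\|$ equal to the top Lyapunov exponent on $\Omega_0$). Then for each $1\le i\le N$ the function $\ln w_i(\cdot)$ is bounded uniformly on $\Omega_0$.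
   Context: $\|\cdot\|$ denotes the Euclidean norm; a positive vector has all coordinates positive; $S^{(n)}(\omega)=S(\theta^{n-1}\omega)\cdots S(\omega)$. *)

theory Defs
  imports "HOL-Probability.Probability"
begin

definition mp_automorphism :: "'a measure \<Rightarrow> ('a \<Rightarrow> 'a) \<Rightarrow> bool" where
  "mp_automorphism M T \<longleftrightarrow>
     T \<in> measurable M M \<and> bij_betw T (space M) (space M) \<and>
     the_inv_into (space M) T \<in> measurable M M \<and>
     (\<forall>B\<in>sets M. measure M (T -` B \<inter> space M) = measure M B)"

definition ergodic_automorphism :: "'a measure \<Rightarrow> ('a \<Rightarrow> 'a) \<Rightarrow> bool" where
  "ergodic_automorphism M T \<longleftrightarrow> mp_automorphism M T \<and>
     (\<forall>B\<in>sets M. T -` B \<inter> space M = B \<longrightarrow> measure M B = 0 \<or> measure M B = 1)"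

definition ln_plus :: "real \<Rightarrow> real" where
  "ln_plus x = max 0 (ln x)"

definition diag_mat :: "real ^ 'n \<Rightarrow> real ^ 'n ^ 'n" where
  "diag_mat v = (\<chi> i j. if i = j then v $ i else 0)"

end

theory Submission
  imports Defs
begin

text \<open>A matrix with positive entries maps nonnegative vectors to vectors whose coordinates
  are comparable up to the factor \<open>max A / min A\<close>. Since \<open>w(\<theta>\<omega>)\<close> is a positive multiple of
  \<open>A (D(\<omega>) w(\<omega>))\<close> and \<open>\<theta>\<close> maps \<open>\<Omega>\<^sub>0\<close> onto itself, every \<open>w(\<omega>)\<close> has uniformly comparable
  coordinates; together with \<open>\<parallel>w(\<omega>)\<parallel> = 1\<close> this pins each coordinate between a fixed positive
  constant and 1.\<close>

lemma diag_mat_mult_vector: "diag_mat v *v x = (\<chi> j. v $ j * x $ j)"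
proof (rule vec_eq_iff[THEN iffD2, OF allI])
  fix i
  have "(\<Sum>j\<in>UNIV. (if i = j then v $ i else 0) * x $ j) = (\<Sum>j\<in>UNIV. if i = j then v $ i * x $ j else 0)"
    by (rule sum.cong) auto
  then show "(diag_mat v *v x) $ i = (\<chi> j. v $ j * x $ j) $ i"
    by (simp add: diag_mat_def matrix_vector_mult_def)
qed

lemma positive_matrix_entry_bounds:
  fixes A :: "real ^ 'n ^ 'm"
  assumes "\<And>i j. A $ i $ j > 0"
  obtains a b where "0 < a" "\<And>i j. a \<le> A $ i $ j" "\<And>i j. A $ i $ j \<le> b"
proof -
  define P where "P = range (\<lambda>(i, j). A $ i $ j)"
  have "finite P" "P \<noteq> {}" unfolding P_def by auto
  moreover have "A $ i $ j \<in> P" for i j unfolding P_def by (auto intro: image_eqI[where x="(i, j)"])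
  moreover have "Min P \<in> P" using \<open>finite P\<close> \<open>P \<noteq> {}\<close> by (rule Min_in)
  ultimately show ?thesis using assms by (intro that[of "Min P" "Max P"]) (auto simp: P_def)
qed

lemma matrix_vector_mult_components_comparable:
  fixes A :: "real ^ 'n ^ 'm"
  assumes "0 \<le> a" "\<And>i j. a \<le> A $ i $ j" "\<And>i j. A $ i $ j \<le> b" "\<And>j. 0 \<le> y $ j"
  shows "a * (A *v y) $ k \<le> b * (A *v y) $ i"
proof -
  have upper: "(A *v y) $ k \<le> b * sum (($) y) UNIV"
    unfolding matrix_vector_mult_def sum_distrib_left
    by (auto intro!: sum_mono mult_right_mono assms)
  have lower: "a * sum (($) y) UNIV \<le> (A *v y) $ i"
    unfolding matrix_vector_mult_def sum_distrib_left
    by (auto intro!: sum_mono mult_right_mono assms)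
  have "0 \<le> b" using assms(1) order_trans[OF assms(2) assms(3)] by linarith
  have "a * (A *v y) $ k \<le> b * (a * sum (($) y) UNIV)"
    using mult_left_mono[OF upper assms(1)] by (simp add: algebra_simps)
  also have "\<dots> \<le> b * (A *v y) $ i"
    using lower \<open>0 \<le> b\<close> by (rule mult_left_mono)
  finally show ?thesis .
qed

lemma matrix_image_multiple_components_comparable:
  fixes A :: "real ^ 'n ^ 'm"
  assumes "0 < a" "\<And>i j. a \<le> A $ i $ j" "\<And>i j. A $ i $ j \<le> b" "\<And>j. 0 \<le> y $ j"
    and "0 < r" "A *v y = r *\<^sub>R v"
  shows "a * v $ k \<le> b * v $ i"
proof -
  have "a * (A *v y) $ k \<le> b * (A *v y) $ i"
    by (rule matrix_vector_mult_components_comparable[OF less_imp_le[OF assms(1)] assms(2-4)])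
  then have "a * (r * v $ k) \<le> b * (r * v $ i)" using assms(6) by simp
  then show ?thesis using \<open>0 < r\<close> by (simp add: mult.left_commute)
qed

lemma unit_vector_component_lower_bound:
  fixes x :: "real ^ 'n"
  assumes "norm x = 1" "\<And>k. \<bar>x $ k\<bar> \<le> K * x $ i"
  shows "1 \<le> real CARD('n) * K * x $ i"
proof -
  have "1 \<le> (\<Sum>k\<in>UNIV. \<bar>x $ k\<bar>)" using norm_le_l1_cart[of x] assms(1) by simp
  also have "\<dots> \<le> (\<Sum>k\<in>(UNIV::'n set). K * x $ i)" by (intro sum_mono assms(2))
  finally show ?thesis by simp
qed

lemma abs_ln_le_of_bounds:
  fixes x c :: real
  assumes "0 < c" "c \<le> x" "x \<le> 1"
  shows "\<bar>ln x\<bar> \<le> - ln c"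
  using assms by (simp add: abs_if)

theorem lemma3p2:
  fixes M :: "'a measure" and \<theta> :: "'a \<Rightarrow> 'a"
    and A :: "real ^ 'n ^ 'n" and d :: "'a \<Rightarrow> real ^ 'n"
    and S :: "'a \<Rightarrow> real ^ 'n ^ 'n"
    and \<Omega>0 :: "'a set" and w :: "'a \<Rightarrow> real ^ 'n" and \<rho> :: "'a \<Rightarrow> real"
  assumes "prob_space M"
    and "ergodic_automorphism M \<theta>"
    and A_pos: "\<And>i j. A $ i $ j > 0"
    and d_meas: "d \<in> borel_measurable M"
    and d_pos: "\<And>\<omega> i. \<omega> \<in> space M \<Longrightarrow> d \<omega> $ i > 0"
    and d_int: "integrable M (\<lambda>\<omega>. ln_plus (Max (range (\<lambda>i. d \<omega> $ i))))"
    and S_def: "\<And>\<omega>. S \<omega> = A ** diag_mat (d \<omega>)"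
    and \<Omega>0_sets: "\<Omega>0 \<in> sets M"
    and \<Omega>0_inv: "\<theta> ` \<Omega>0 = \<Omega>0"
    and \<Omega>0_prob: "measure M \<Omega>0 = 1"
    and w_meas: "w \<in> borel_measurable (restrict_space M \<Omega>0)"
    and w_pos: "\<And>\<omega> i. \<omega> \<in> \<Omega>0 \<Longrightarrow> w \<omega> $ i > 0"
    and w_norm: "\<And>\<omega>. \<omega> \<in> \<Omega>0 \<Longrightarrow> norm (w \<omega>) = 1"
    and \<rho>_pos: "\<And>\<omega>. \<omega> \<in> \<Omega>0 \<Longrightarrow> \<rho> \<omega> > 0"
    and eigen: "\<And>\<omega>. \<omega> \<in> \<Omega>0 \<Longrightarrow> S \<omega> *v w \<omega> = \<rho> \<omega> *\<^sub>R w (\<theta> \<omega>)"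
  shows "\<forall>i. \<exists>C. \<forall>\<omega>\<in>\<Omega>0. \<bar>ln (w \<omega> $ i)\<bar> \<le> C"
proof
  fix i
  obtain a b where a_pos: "0 < a" and a_le: "\<And>i j. a \<le> A $ i $ j" and le_b: "\<And>i j. A $ i $ j \<le> b"
    using positive_matrix_entry_bounds[OF A_pos] by metis
  have comparable: "\<bar>w \<omega>' $ k\<bar> \<le> (b / a) * w \<omega>' $ i" if "\<omega>' \<in> \<Omega>0" for \<omega>' k
  proof -
    obtain \<omega> where \<omega>: "\<omega> \<in> \<Omega>0" "\<omega>' = \<theta> \<omega>" using \<open>\<omega>' \<in> \<Omega>0\<close> \<Omega>0_inv by (metis imageE)
    then have "\<omega> \<in> space M" using sets.sets_into_space[OF \<Omega>0_sets] by blast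
    have nonneg: "0 \<le> (diag_mat (d \<omega>) *v w \<omega>) $ j" for j
      using d_pos[OF \<open>\<omega> \<in> space M\<close>, of j] w_pos[OF \<omega>(1), of j] by (simp add: diag_mat_mult_vector)
    have image: "A *v (diag_mat (d \<omega>) *v w \<omega>) = \<rho> \<omega> *\<^sub>R w \<omega>'"
      using eigen[OF \<omega>(1)] \<omega>(2) by (simp add: S_def matrix_vector_mul_assoc)
    have "a * w \<omega>' $ k \<le> b * w \<omega>' $ i"
      by (rule matrix_image_multiple_components_comparable[OF a_pos a_le le_b nonneg \<rho>_pos[OF \<omega>(1)] image])
    then show ?thesis
      using a_pos w_pos[OF \<open>\<omega>' \<in> \<Omega>0\<close>, of k] by (simp add: pos_le_divide_eq mult.commute)
  qed
  define c where "c = a / (b * real CARD('n))"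
  have "0 < b" using a_pos a_le[of i i] le_b[of i i] by linarith
  show "\<exists>C. \<forall>\<omega>\<in>\<Omega>0. \<bar>ln (w \<omega> $ i)\<bar> \<le> C"
  proof (intro exI[of _ "- ln c"] ballI abs_ln_le_of_bounds)
    fix \<omega> assume "\<omega> \<in> \<Omega>0"
    show "0 < c" using a_pos \<open>0 < b\<close> by (simp add: c_def)
    have "1 \<le> real CARD('n) * (b / a) * w \<omega> $ i"
      using \<open>\<omega> \<in> \<Omega>0\<close> by (intro unit_vector_component_lower_bound w_norm comparable)
    then show "c \<le> w \<omega> $ i"
      using a_pos \<open>0 < b\<close> by (simp add: c_def field_simps)
    show "w \<omega> $ i \<le> 1" using component_le_norm_cart[of "w \<omega>" i] w_norm[OF \<open>\<omega> \<in> \<Omega>0\<close>] by simp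
  qed
qed

end
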